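(* Let $\mathcal{N}=(D,P)$ be a broadcast network with client $P=(Q,I,\delta)$, let $m\le |Q|$ and $s_1,\dots,s_m\in Q$. There is a cycle $(\{s_1\},\dots,\{s_m\})\to_G^+(\{s_1\},\dots,\{s_m\})$ (a path with at least one edge) in the graph $G$ if and only if there is a configuration $c$ with $\mathrm{Set}(c)=\{s_1,\dots,s_m\}$ and $c\to^+ c$.
   Context: A broadcast network is a pair $\mathcal{N}=(D,P)$ where $D$ is a finite set of messages and $P=(Q,I,\delta)$ is a finite automaton with transition relation $\delta\subseteq Q\times \mathrm{Ops}(D)\times Q$, $\mathrm{Ops}(D)=\{!a,\ ?a : a\in D\}$; write $q\xrightarrow{o}q'$ for $(q,o,q')\in\delta$. A configuration is a tuple $c\in Q^k$, $k\in\mathbb{N}$, with entries $c[i]$ and set of occurring states $\mathrm{Set}(c)$. For $c,c'\in Q^k$ and $a\in D$, $c\xrightarrow{a}c'$ holds if some index $i$ has $c[i]\xrightarrow{!a}c'[i]$, there is $R\subseteq[1..k]\setminus\{i\}$ with $c[j]\xrightarrow{?a}c'[j]$ for all $j\in R$, and $c[j]=c'[j]$ for $j\notin R\cup\{i\}$; $c\to^+c'$ means a sequence of at least one such transition. For $S\subseteq Q$ and $a\in D$ let $\mathrm{Post}_{?a}(S)=\{r'\in Q: \exists r\in S,\ r\xrightarrow{?a}r'\}$ and $\mathrm{Enabled}_{?a}(S)=\{r\in S : \mathrm{Post}_{?a}(\{r\})\neq\emptyset\}$. The graph $G=(V,\to_G)$ has vertex set $V=\bigcup_{k\le|Q|}(2^Q)^k$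 (tuples of sets of states). There is an edge $(S_1,\dots,S_k)\to_G(S'_1,\dots,S'_k)$ iff: (1) there are $j\in[1..k]$, $s\in S_j$, $s'\in S'_j$, $a\in D$ with $s\xrightarrow{!a}s'$; (2) for each $i\in[1..k]$ there are $\mathrm{Gen}_i\subseteq\mathrm{Post}_{?a}(S_i)$ and $\mathrm{Kill}_i\subseteq\mathrm{Enabled}_{?a}(S_i)$ such that $S'_i=(S_i\setminus\mathrm{Kill}_i)\cup\mathrm{Gen}_i$ for $i\neq j$ and $S'_j=(U_j\setminus\mathrm{Kill}_j)\cup\mathrm{Gen}_j\cup\{s'\}$, where $U_j$ is either $S_j$ or $S_j\setminus\{s\}$; (3) for each $i\in[1..k]$ and each $q\in\mathrm{Kill}_i$, $\mathrm{Post}_{?a}(\{q\})\cap\mathrm{Gen}_i\neq\emptyset$. *)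

theory Defs
  imports Main
begin

datatype 'd op = Send 'd | Recv 'd

definition Ops :: "'d set \<Rightarrow> 'd op set" where
  "Ops D = Send ` D \<union> Recv ` D"

definition broadcast_network ::
  "'d set \<Rightarrow> 'q set \<Rightarrow> 'q set \<Rightarrow> ('q \<times> 'd op \<times> 'q) set \<Rightarrow> bool" where
  "broadcast_network D Q I delta \<longleftrightarrow>
     finite D \<and> finite Q \<and> I \<subseteq> Q \<and> delta \<subseteq> Q \<times> Ops D \<times> Q"

definition conf_step_lbl ::
  "'d set \<Rightarrow> 'q set \<Rightarrow> ('q \<times> 'd op \<times> 'q) set \<Rightarrow> 'd \<Rightarrow> 'q list \<Rightarrow> 'q list \<Rightarrow> bool" where
  "conf_step_lbl D Q delta a c c' \<longleftrightarrow>
     a \<in> D \<and> length c = length c' \<and> set c \<subseteq> Q \<and> set c' \<subseteq> Q \<and>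
     (\<exists>i < length c. (c ! i, Send a, c' ! i) \<in> delta \<and>
        (\<exists>R \<subseteq> {0..<length c} - {i}.
           (\<forall>j \<in> R. (c ! j, Recv a, c' ! j) \<in> delta) \<and>
           (\<forall>j < length c. j \<notin> R \<and> j \<noteq> i \<longrightarrow> c' ! j = c ! j)))"

definition conf_step ::
  "'d set \<Rightarrow> 'q set \<Rightarrow> ('q \<times> 'd op \<times> 'q) set \<Rightarrow> 'q list \<Rightarrow> 'q list \<Rightarrow> bool" where
  "conf_step D Q delta c c' \<longleftrightarrow> (\<exists>a. conf_step_lbl D Q delta a c c')"

definition Post_recv :: "('q \<times> 'd op \<times> 'q) set \<Rightarrow> 'd \<Rightarrow> 'q set \<Rightarrow> 'q set" where
  "Post_recv delta a S = {r'. \<exists>r \<in> S. (r, Recv a, r') \<in> delta}"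

definition Enabled_recv :: "('q \<times> 'd op \<times> 'q) set \<Rightarrow> 'd \<Rightarrow> 'q set \<Rightarrow> 'q set" where
  "Enabled_recv delta a S = {r \<in> S. Post_recv delta a {r} \<noteq> {}}"

definition G_vertex :: "'q set \<Rightarrow> 'q set list \<Rightarrow> bool" where
  "G_vertex Q Ss \<longleftrightarrow> length Ss \<le> card Q \<and> (\<forall>S \<in> set Ss. S \<subseteq> Q)"

definition G_edge ::
  "'d set \<Rightarrow> 'q set \<Rightarrow> ('q \<times> 'd op \<times> 'q) set \<Rightarrow> 'q set list \<Rightarrow> 'q set list \<Rightarrow> bool" where
  "G_edge D Q delta Ss Ss' \<longleftrightarrow>
     G_vertex Q Ss \<and> G_vertex Q Ss' \<and> length Ss' = length Ss \<and>
     (\<exists>j < length Ss. \<exists>s \<in> Ss ! j. \<exists>s' \<in> Ss' ! j. \<exists>a \<in> D.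
        (s, Send a, s') \<in> delta \<and>
        (\<exists>Gen Kill :: nat \<Rightarrow> 'q set.
           (\<forall>i < length Ss.
              Gen i \<subseteq> Post_recv delta a (Ss ! i) \<and>
              Kill i \<subseteq> Enabled_recv delta a (Ss ! i) \<and>
              (i \<noteq> j \<longrightarrow> Ss' ! i = (Ss ! i - Kill i) \<union> Gen i) \<and>
              (\<forall>q \<in> Kill i. Post_recv delta a {q} \<inter> Gen i \<noteq> {})) \<and>
           (\<exists>U. (U = Ss ! j \<or> U = Ss ! j - {s}) \<and>
                Ss' ! j = (U - Kill j) \<union> Gen j \<union> {s'})))"

end

theory Submission
  imports Defs
begin

(* A cycle of G is realised by processes running in lockstep along it. An edge of G relates each
   component to the next one by a relation that is total in both directions (stay, receive a, or
   send a), so through every such transition runs a thread choosing one state per layer of the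
   whole cycle. One thread per component and one per edge, carrying that edge's sender, give a
   configuration whose every step is a broadcast; as all threads start and end in the
   singletons {s_i}, the configuration returns to itself.

   Conversely, the processes of a cyclic run from c are grouped by an index i with s_i = c[k],
   and each group is abstracted to the set of its current states. A broadcast changes these sets
   as an edge of G allows: Gen collects the states entered by receivers, Kill the states left by
   receivers that no idle process keeps. *)

lemma tranclp_iff_chain:
  "R\<^sup>+\<^sup>+ x y \<longleftrightarrow> (\<exists>n f. 0 < n \<and> f 0 = x \<and> f n = y \<and> (\<forall>t<n. R (f t) (f (Suc t))))"
  by (auto simp: tranclp_power relpowp_fun_conv)

lemma tranclp_chain:
  assumes "0 < n" "\<forall>t<n. R\<^sup>+\<^sup>+ (f t) (f (Suc t))"
  shows "R\<^sup>+\<^sup>+ (f 0) (f n)"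
  using assms
proof (induction n)
  case (Suc n)
  then show ?case
    by (cases "n = 0") (auto intro: tranclp_trans)
qed simp

section \<open>Lockstep runs of configurations\<close>

definition moves_with :: "('q \<times> 'd op \<times> 'q) set \<Rightarrow> 'd \<Rightarrow> 'q \<Rightarrow> 'q \<Rightarrow> bool" where
  "moves_with delta a q q' \<longleftrightarrow> q = q' \<or> (q, Recv a, q') \<in> delta \<or> (q, Send a, q') \<in> delta"

lemma conf_step_length: "conf_step D Q delta c c' \<Longrightarrow> length c' = length c"
  unfolding conf_step_def conf_step_lbl_def by auto

lemma conf_step_single_send:
  assumes "k < length x" "(x ! k, Send a, q) \<in> delta" "a \<in> D" "set x \<subseteq> Q" "q \<in> Q"
  shows "conf_step D Q delta x (x[k := q])"
  unfolding conf_step_def conf_step_lbl_def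
proof (intro exI conjI)
  show "set (x[k := q]) \<subseteq> Q"
    using assms set_update_subset_insert by fastforce
  show "{} \<subseteq> {0..<length x} - {k}" by simp
qed (use assms in auto)

lemma conf_rtranclp_sends:
  assumes "list_all2 (\<lambda>q q'. q = q' \<or> (q, Send a, q') \<in> delta) x y"
    and "a \<in> D" "set x \<subseteq> Q" "set y \<subseteq> Q"
  shows "(conf_step D Q delta)\<^sup>*\<^sup>* x y"
proof -
  have len: "length x = length y"
    and move: "\<And>k. k < length x \<Longrightarrow> x ! k = y ! k \<or> (x ! k, Send a, y ! k) \<in> delta"
    using assms(1) by (auto simp: list_all2_conv_all_nth)
  have "(conf_step D Q delta)\<^sup>*\<^sup>* x (take i y @ drop i x)" if "i \<le> length x" for i
    using that
  proof (induction i)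
    case 0
    then show ?case by simp
  next
    case (Suc i)
    let ?z = "take i y @ drop i x"
    have upd: "take (Suc i) y @ drop (Suc i) x = ?z[i := y ! i]"
      using Suc.prems len
      by (simp add: take_Suc_conv_app_nth list_update_append Cons_nth_drop_Suc[symmetric])
    have zi: "?z ! i = x ! i"
      using Suc.prems len by (simp add: nth_append)
    have zQ: "set ?z \<subseteq> Q"
      using assms(3,4) by (auto dest: in_set_takeD in_set_dropD)
    show ?case
    proof (cases "x ! i = y ! i")
      case True
      then have "?z[i := y ! i] = ?z"
        using zi by (metis list_update_id)
      then show ?thesis
        using Suc upd by simp
    next
      case False
      have "conf_step D Q delta ?z (?z[i := y ! i])"
      proof (rule conf_step_single_send)
        show "(?z ! i, Send a, y ! i) \<in> delta"
          using move[of i] False Suc.prems zi by simp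
      qed (use Suc.prems len zQ assms(2,4) in auto)
      then show ?thesis
        using Suc upd by (simp add: rtranclp.rtrancl_into_rtrancl)
    qed
  qed
  from this[of "length x"] show ?thesis
    using len by simp
qed

(* One broadcast moves the sender and all receivers; the processes that move by sending a
   themselves follow with broadcasts of their own. *)
lemma conf_tranclp_broadcast:
  assumes "list_all2 (moves_with delta a) x y"
    and "a \<in> D" "set x \<subseteq> Q" "set y \<subseteq> Q"
    and "p < length x" "(x ! p, Send a, y ! p) \<in> delta"
  shows "(conf_step D Q delta)\<^sup>+\<^sup>+ x y"
proof -
  have len: "length y = length x" and move: "\<And>k. k < length x \<Longrightarrow> moves_with delta a (x ! k) (y ! k)"
    using assms(1) by (auto simp: list_all2_conv_all_nth)
  define R where "R = {k. k < length x \<and> k \<noteq> p \<and> (x ! k, Recv a, y ! k) \<in> delta}"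
  define z where "z = map (\<lambda>k. if k = p \<or> k \<in> R then y ! k else x ! k) [0..<length x]"
  have zk: "z ! k = (if k = p \<or> k \<in> R then y ! k else x ! k)" if "k < length x" for k
    using that unfolding z_def by simp
  have zQ: "set z \<subseteq> Q"
    using assms(3,4) len unfolding z_def by (auto intro!: nth_mem)
  have "conf_step D Q delta x z"
    unfolding conf_step_def conf_step_lbl_def
  proof (intro exI conjI)
    show "R \<subseteq> {0..<length x} - {p}"
      unfolding R_def by auto
  qed (use assms zk zQ in \<open>auto simp: z_def R_def\<close>)
  moreover have "(conf_step D Q delta)\<^sup>*\<^sup>* z y"
  proof (rule conf_rtranclp_sends)
    show "list_all2 (\<lambda>q q'. q = q' \<or> (q, Send a, q') \<in> delta) z y"
      using move len zk unfolding list_all2_conv_all_nth moves_with_def R_def by (auto simp: z_def)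
  qed (use assms zQ in auto)
  ultimately show ?thesis
    by (rule tranclp_rtranclp_tranclp[OF tranclp.r_into_trancl])
qed

lemma conf_tranclp_threads:
  assumes "0 < n" "\<forall>t<n. a t \<in> D"
    and "\<forall>g\<in>set gs. \<forall>t\<le>n. g t \<in> Q"
    and "\<forall>g\<in>set gs. \<forall>t<n. moves_with delta (a t) (g t) (g (Suc t))"
    and "\<forall>t<n. \<exists>g\<in>set gs. (g t, Send (a t), g (Suc t)) \<in> delta"
  shows "(conf_step D Q delta)\<^sup>+\<^sup>+ (map (\<lambda>g. g 0) gs) (map (\<lambda>g. g n) gs)"
proof -
  have "(conf_step D Q delta)\<^sup>+\<^sup>+ (map (\<lambda>g. g t) gs) (map (\<lambda>g. g (Suc t)) gs)" if t: "t < n" for t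
  proof -
    obtain g where "g \<in> set gs" "(g t, Send (a t), g (Suc t)) \<in> delta"
      using assms(5) t by blast
    then obtain p where "p < length gs" "((gs ! p) t, Send (a t), (gs ! p) (Suc t)) \<in> delta"
      by (auto simp: in_set_conv_nth)
    then show ?thesis
    proof (intro conf_tranclp_broadcast[where a = "a t" and p = p])
      show "list_all2 (moves_with delta (a t)) (map (\<lambda>g. g t) gs) (map (\<lambda>g. g (Suc t)) gs)"
        using assms(4) t by (simp add: list_all2_map1 list_all2_map2 list_all2_same)
    qed (use assms(2,3) t in auto)
  qed
  then show ?thesis
    using tranclp_chain[of n _ "\<lambda>t. map (\<lambda>g. g t) gs"] assms(1) by simp
qed

section \<open>Threads through layered graphs\<close>

lemma thread_forward:
  assumes "\<forall>t<n. \<forall>q\<in>F t. \<exists>q'\<in>F (Suc t). R t q q'" "t0 \<le> n" "q \<in> F t0"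
  shows "\<exists>g. g t0 = q \<and> (\<forall>t\<in>{t0..n}. g t \<in> F t) \<and> (\<forall>t\<in>{t0..<n}. R t (g t) (g (Suc t)))"
  using assms
proof (induction n)
  case (Suc n)
  show ?case
  proof (cases "t0 = Suc n")
    case True
    then show ?thesis
      using Suc.prems by (intro exI[of _ "\<lambda>_. q"]) auto
  next
    case False
    then obtain g where g: "g t0 = q" "\<forall>t\<in>{t0..n}. g t \<in> F t" "\<forall>t\<in>{t0..<n}. R t (g t) (g (Suc t))"
      using Suc by auto
    moreover obtain q' where "q' \<in> F (Suc n)" "R n (g n) q'"
      using Suc.prems(1,2) g(2) False by force
    ultimately show ?thesis
      using False Suc.prems(2)
      by (intro exI[of _ "g(Suc n := q')"]) (auto simp: le_Suc_eq less_Suc_eq)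
  qed
qed (intro exI[of _ "\<lambda>_. q"], auto)

lemma thread_backward:
  assumes "\<forall>t<t0. \<forall>q'\<in>F (Suc t). \<exists>q\<in>F t. R t q q'" "q \<in> F t0"
  shows "\<exists>g. g t0 = q \<and> (\<forall>t\<le>t0. g t \<in> F t) \<and> (\<forall>t<t0. R t (g t) (g (Suc t)))"
  using assms
proof (induction t0 arbitrary: q)
  case (Suc t0)
  then obtain p where "p \<in> F t0" "R t0 p q"
    by blast
  moreover obtain g where "g t0 = p" "\<forall>t\<le>t0. g t \<in> F t" "\<forall>t<t0. R t (g t) (g (Suc t))"
    using Suc.IH[OF _ \<open>p \<in> F t0\<close>] Suc.prems(1) by auto
  ultimately show ?case
    using Suc.prems(2) by (intro exI[of _ "g(Suc t0 := q)"]) (auto simp: le_Suc_eq less_Suc_eq)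
next
  case 0
  then show ?case
    by (intro exI[of _ "\<lambda>_. q"]) auto
qed

lemma thread_through:
  assumes "\<forall>t<n. rel_set (R t) (F t) (F (Suc t))" "t0 < n"
    and "q0 \<in> F t0" "q1 \<in> F (Suc t0)" "R t0 q0 q1"
  shows "\<exists>g. (\<forall>t\<le>n. g t \<in> F t) \<and> (\<forall>t<n. R t (g t) (g (Suc t))) \<and> g t0 = q0 \<and> g (Suc t0) = q1"
proof -
  obtain g1 where g1: "g1 t0 = q0" "\<forall>t\<le>t0. g1 t \<in> F t" "\<forall>t<t0. R t (g1 t) (g1 (Suc t))"
    using thread_backward[of t0 F R q0] assms(1-3) by (auto simp: rel_set_def)
  obtain g2 where g2: "g2 (Suc t0) = q1" "\<forall>t\<in>{Suc t0..n}. g2 t \<in> F t"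
      "\<forall>t\<in>{Suc t0..<n}. R t (g2 t) (g2 (Suc t))"
    using thread_forward[of n F R "Suc t0" q1] assms(1,2,4) by (auto simp: rel_set_def)
  define g where "g t = (if t \<le> t0 then g1 t else g2 t)" for t
  have "R t (g t) (g (Suc t))" if "t < n" for t
    using g1 g2 assms(5) that unfolding g_def by (cases t0 t rule: linorder_cases) auto
  moreover have "g t \<in> F t" if "t \<le> n" for t
    using g1 g2 that unfolding g_def by auto
  ultimately show ?thesis
    using g1 g2 by (intro exI[of _ g]) (auto simp: g_def)
qed

section \<open>From cycles of G to cyclic runs\<close>

lemma G_edgeE:
  assumes "G_edge D Q delta Ss Ss'"
  obtains j s0 s1 a where "j < length Ss" "s0 \<in> Ss ! j" "s1 \<in> Ss' ! j" "a \<in> D"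
    "(s0, Send a, s1) \<in> delta" "\<forall>i<length Ss. rel_set (moves_with delta a) (Ss ! i) (Ss' ! i)"
proof -
  from assms obtain j s0 s1 a Gen Kill U where
    j: "j < length Ss" "s0 \<in> Ss ! j" "s1 \<in> Ss' ! j" "a \<in> D" "(s0, Send a, s1) \<in> delta" and
    gen_kill: "\<forall>i<length Ss. Gen i \<subseteq> Post_recv delta a (Ss ! i) \<and>
      (i \<noteq> j \<longrightarrow> Ss' ! i = (Ss ! i - Kill i) \<union> Gen i) \<and>
      (\<forall>q \<in> Kill i. Post_recv delta a {q} \<inter> Gen i \<noteq> {})" and
    U: "U = Ss ! j \<or> U = Ss ! j - {s0}" "Ss' ! j = (U - Kill j) \<union> Gen j \<union> {s1}"
    unfolding G_edge_def by metis
  have "rel_set (moves_with delta a) (Ss ! i) (Ss' ! i)" if i: "i < length Ss" for i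
  proof -
    \<comment> \<open>A killed state moves into Gen by receiving; besides, only the sender's state may vanish.\<close>
    let ?sender = "if i = j then {s0} else {}"
    have kept: "Ss ! i - Kill i - ?sender \<subseteq> Ss' ! i" and gen: "Gen i \<subseteq> Ss' ! i"
      and new: "Ss' ! i \<subseteq> Ss ! i \<union> Gen i \<union> (if i = j then {s1} else {})"
      using gen_kill i U by (cases "i = j"; auto)+
    show ?thesis
      unfolding rel_set_def
    proof (intro conjI ballI)
      fix q assume q: "q \<in> Ss ! i"
      consider "q \<in> Kill i" | "i = j" "q = s0" | "q \<in> Ss' ! i"
        using q kept by (auto split: if_splits)
      then show "\<exists>q'\<in>Ss' ! i. moves_with delta a q q'"
      proof cases
        case 1
        then show ?thesis
          using gen_kill i gen unfolding Post_recv_def moves_with_def by blast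
      qed (use j in \<open>auto simp: moves_with_def\<close>)
    next
      fix q' assume "q' \<in> Ss' ! i"
      then consider "q' \<in> Gen i" | "i = j" "q' = s1" | "q' \<in> Ss ! i"
        using new by (auto split: if_splits)
      then show "\<exists>q\<in>Ss ! i. moves_with delta a q q'"
      proof cases
        case 1
        then show ?thesis
          using gen_kill i unfolding Post_recv_def moves_with_def by blast
      qed (use j in \<open>auto simp: moves_with_def\<close>)
    qed
  qed
  then show ?thesis
    using that j by blast
qed

lemma G_path_length:
  assumes "\<forall>t<n. G_edge D Q delta (f t) (f (Suc t))" "t \<le> n"
  shows "length (f t) = length (f 0)"
  using assms(2)
proof (induction t)
  case (Suc t)
  then show ?case
    using assms(1) unfolding G_edge_def by simp
qed simp

lemma G_path_labels:
  assumes "\<forall>t<n. G_edge D Q delta (f t) (f (Suc t))"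
  obtains a j s0 s1 where
    "\<And>t. t < n \<Longrightarrow> j t < length (f 0) \<and> s0 t \<in> f t ! j t \<and> s1 t \<in> f (Suc t) ! j t \<and>
      a t \<in> D \<and> (s0 t, Send (a t), s1 t) \<in> delta"
    and "\<And>t i. t < n \<Longrightarrow> i < length (f 0) \<Longrightarrow>
      rel_set (moves_with delta (a t)) (f t ! i) (f (Suc t) ! i)"
proof -
  have "\<forall>t<n. \<exists>a j s0 s1. j < length (f 0) \<and> s0 \<in> f t ! j \<and> s1 \<in> f (Suc t) ! j \<and> a \<in> D \<and>
      (s0, Send a, s1) \<in> delta \<and>
      (\<forall>i<length (f 0). rel_set (moves_with delta a) (f t ! i) (f (Suc t) ! i))"
    using assms G_path_length[OF assms] by (metis G_edgeE less_imp_le_nat)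
  then show thesis
    using that by metis
qed

lemma G_path_threads:
  assumes edges: "\<forall>t<n. G_edge D Q delta (f t) (f (Suc t))"
    and nonempty: "\<forall>i<length (f 0). f 0 ! i \<noteq> {}"
  obtains a gs where "\<forall>t<n. a t \<in> D"
    and "\<forall>g\<in>set gs. \<forall>t<n. moves_with delta (a t) (g t) (g (Suc t))"
    and "\<forall>t<n. \<exists>g\<in>set gs. (g t, Send (a t), g (Suc t)) \<in> delta"
    and "\<forall>g\<in>set gs. \<exists>i<length (f 0). \<forall>t\<le>n. g t \<in> f t ! i"
    and "\<forall>i<length (f 0). \<exists>g\<in>set gs. \<forall>t\<le>n. g t \<in> f t ! i"
proof -
  define m where "m = length (f 0)"
  obtain a j s0 s1 where j: "\<And>t. t < n \<Longrightarrow> j t < m \<and> s0 t \<in> f t ! j t \<and>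
      s1 t \<in> f (Suc t) ! j t \<and> a t \<in> D \<and> (s0 t, Send (a t), s1 t) \<in> delta"
    and moves: "\<And>t i. t < n \<Longrightarrow> i < m \<Longrightarrow>
      rel_set (moves_with delta (a t)) (f t ! i) (f (Suc t) ! i)"
    using G_path_labels[OF edges] unfolding m_def by metis
  define thread where "thread i g \<longleftrightarrow>
    (\<forall>t\<le>n. g t \<in> f t ! i) \<and> (\<forall>t<n. moves_with delta (a t) (g t) (g (Suc t)))" for i g
  have "\<exists>g. thread (j t) g \<and> g t = s0 t \<and> g (Suc t) = s1 t" if t: "t < n" for t
  proof -
    have "moves_with delta (a t) (s0 t) (s1 t)"
      using j[OF t] by (simp add: moves_with_def)
    then show ?thesis
      using thread_through[of n "\<lambda>t. moves_with delta (a t)" "\<lambda>t'. f t' ! j t" t "s0 t" "s1 t"]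
      using j moves t unfolding thread_def by auto
  qed
  then obtain sender where sender: "\<And>t. t < n \<Longrightarrow>
      thread (j t) (sender t) \<and> sender t t = s0 t \<and> sender t (Suc t) = s1 t"
    by metis
  have "\<exists>g. thread i g" if i: "i < m" for i
  proof -
    obtain q where "q \<in> f 0 ! i"
      using nonempty i unfolding m_def by blast
    then obtain g where "\<forall>t\<in>{0..n}. g t \<in> f t ! i"
        "\<forall>t\<in>{0..<n}. moves_with delta (a t) (g t) (g (Suc t))"
      using thread_forward[of n "\<lambda>t. f t ! i" "\<lambda>t. moves_with delta (a t)" 0 q] moves[OF _ i]
      unfolding rel_set_def by auto
    then have "thread i g"
      unfolding thread_def by auto
    then show ?thesis
      by blast
  qed
  then obtain idle where idle: "\<And>i. i < m \<Longrightarrow> thread i (idle i)"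
    by metis
  define gs where "gs = map idle [0..<m] @ map sender [0..<n]"
  show thesis
  proof (rule that)
    show "\<forall>t<n. a t \<in> D"
      using j by blast
    have gs_threads: "\<exists>i<m. thread i g" if "g \<in> set gs" for g
      using that idle sender j unfolding gs_def by fastforce
    then show "\<forall>g\<in>set gs. \<forall>t<n. moves_with delta (a t) (g t) (g (Suc t))"
      "\<forall>g\<in>set gs. \<exists>i<length (f 0). \<forall>t\<le>n. g t \<in> f t ! i"
      unfolding thread_def m_def by blast+
    show "\<forall>i<length (f 0). \<exists>g\<in>set gs. \<forall>t\<le>n. g t \<in> f t ! i"
      using idle unfolding gs_def thread_def m_def by fastforce
    show "\<forall>t<n. \<exists>g\<in>set gs. (g t, Send (a t), g (Suc t)) \<in> delta"
    proof (intro allI impI)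
      fix t assume "t < n"
      then have "sender t \<in> set gs"
        unfolding gs_def by simp
      then show "\<exists>g\<in>set gs. (g t, Send (a t), g (Suc t)) \<in> delta"
        using sender[OF \<open>t < n\<close>] j[OF \<open>t < n\<close>] by (intro bexI[of _ "sender t"]) auto
    qed
  qed
qed

lemma conf_cycle_of_G_cycle:
  assumes "(G_edge D Q delta)\<^sup>+\<^sup>+ (map (\<lambda>x. {x}) s) (map (\<lambda>x. {x}) s)"
  shows "\<exists>c. set c \<subseteq> Q \<and> set c = set s \<and> (conf_step D Q delta)\<^sup>+\<^sup>+ c c"
proof -
  obtain n f where n: "0 < n" and f0: "f 0 = map (\<lambda>x. {x}) s" and fn: "f n = f 0"
    and edges: "\<forall>t<n. G_edge D Q delta (f t) (f (Suc t))"
    using assms unfolding tranclp_iff_chain by metis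
  obtain a gs where a: "\<forall>t<n. a t \<in> D"
    and moves: "\<forall>g\<in>set gs. \<forall>t<n. moves_with delta (a t) (g t) (g (Suc t))"
    and sends: "\<forall>t<n. \<exists>g\<in>set gs. (g t, Send (a t), g (Suc t)) \<in> delta"
    and threads: "\<forall>g\<in>set gs. \<exists>i<length s. \<forall>t\<le>n. g t \<in> f t ! i"
    and covering: "\<forall>i<length s. \<exists>g\<in>set gs. \<forall>t\<le>n. g t \<in> f t ! i"
    using G_path_threads[OF edges] f0 by auto
  have ends: "\<exists>i<length s. g 0 = s ! i \<and> g n = s ! i" if "g \<in> set gs" for g
    using threads that f0 fn by fastforce
  have "f t ! i \<subseteq> Q" if "t \<le> n" "i < length s" for t i
  proof -
    have "G_vertex Q (f t)"
      using edges n fn that(1) unfolding G_edge_def by (metis le_neq_implies_less)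
    moreover have "length (f t) = length s"
      using G_path_length[OF edges that(1)] f0 by simp
    ultimately show ?thesis
      using that unfolding G_vertex_def by auto
  qed
  then have in_Q: "\<forall>g\<in>set gs. \<forall>t\<le>n. g t \<in> Q"
    using threads by blast
  then have "(conf_step D Q delta)\<^sup>+\<^sup>+ (map (\<lambda>g. g 0) gs) (map (\<lambda>g. g n) gs)"
    using conf_tranclp_threads n a moves sends by blast
  moreover have "map (\<lambda>g. g n) gs = map (\<lambda>g. g 0) gs"
    using ends by fastforce
  moreover have "set (map (\<lambda>g. g 0) gs) = set s"
  proof
    show "set (map (\<lambda>g. g 0) gs) \<subseteq> set s"
      using ends by fastforce
    show "set s \<subseteq> set (map (\<lambda>g. g 0) gs)"
    proof
      fix q assume "q \<in> set s"
      then obtain i where i: "i < length s" "q = s ! i"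
        by (auto simp: in_set_conv_nth)
      then obtain g where g: "g \<in> set gs" "g 0 \<in> f 0 ! i"
        using covering by blast
      then have "g 0 = q"
        using f0 i by simp
      then show "q \<in> set (map (\<lambda>g. g 0) gs)"
        using g(1) by (simp add: image_iff) metis
    qed
  qed
  moreover have "set (map (\<lambda>g. g 0) gs) \<subseteq> Q"
    using in_Q by auto
  ultimately show ?thesis
    by metis
qed

section \<open>From cyclic runs to cycles of G\<close>

lemma image_broadcast_Gen_Kill:
  fixes x y :: "'k \<Rightarrow> 'q"
  assumes idle: "\<forall>k\<in>K. k \<notin> R \<longrightarrow> k \<noteq> p \<longrightarrow> y k = x k"
    and recv: "\<forall>k\<in>K \<inter> R. (x k, Recv a, y k) \<in> delta"
    and "p \<notin> R"
  defines "Stay \<equiv> x ` (K - R - {p})" and "Gen \<equiv> y ` (K \<inter> R)"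
    and "Kill \<equiv> x ` (K \<inter> R) - x ` (K - R - {p})"
  shows "Gen \<subseteq> Post_recv delta a (x ` K)"
    and "Kill \<subseteq> Enabled_recv delta a (x ` K)"
    and "\<forall>q\<in>Kill. Post_recv delta a {q} \<inter> Gen \<noteq> {}"
    and "p \<notin> K \<Longrightarrow> y ` K = (x ` K - Kill) \<union> Gen"
    and "p \<in> K \<Longrightarrow> y ` K = (x ` K - ({x p} - Stay) - Kill) \<union> Gen \<union> {y p}"
proof -
  have stay: "y ` (K - R - {p}) = Stay"
    using idle unfolding Stay_def by (auto intro!: image_cong)
  show "Gen \<subseteq> Post_recv delta a (x ` K)"
    using recv unfolding Gen_def Post_recv_def by blast
  show "Kill \<subseteq> Enabled_recv delta a (x ` K)"
    using recv unfolding Kill_def Enabled_recv_def Post_recv_def by blast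
  show "\<forall>q\<in>Kill. Post_recv delta a {q} \<inter> Gen \<noteq> {}"
    using recv unfolding Kill_def Gen_def Post_recv_def by blast
  show "p \<notin> K \<Longrightarrow> y ` K = (x ` K - Kill) \<union> Gen"
    using stay unfolding Stay_def Kill_def Gen_def by blast
  show "p \<in> K \<Longrightarrow> y ` K = (x ` K - ({x p} - Stay) - Kill) \<union> Gen \<union> {y p}"
    using stay \<open>p \<notin> R\<close> unfolding Stay_def Kill_def Gen_def by blast
qed

(* A group without processes (possible when s repeats a state) keeps its initial singleton. *)
definition group_states :: "(nat \<Rightarrow> nat) \<Rightarrow> 'q list \<Rightarrow> 'q list \<Rightarrow> 'q set list" where
  "group_states grp s x = map (\<lambda>i. let K = {k. k < length x \<and> grp k = i} in
     if K = {} then {s ! i} else (!) x ` K) [0..<length s]"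

lemma G_edge_group_states:
  assumes step: "conf_step_lbl D Q delta a x y"
    and grp: "\<forall>k<length x. grp k < length s" and "length s \<le> card Q" "set s \<subseteq> Q"
  shows "G_edge D Q delta (group_states grp s x) (group_states grp s y)"
proof -
  from step obtain p R where a: "a \<in> D" and len: "length y = length x"
    and Q: "set x \<subseteq> Q" "set y \<subseteq> Q"
    and p: "p < length x" "(x ! p, Send a, y ! p) \<in> delta" and R: "R \<subseteq> {0..<length x} - {p}"
    and recv: "\<forall>k\<in>R. (x ! k, Recv a, y ! k) \<in> delta"
    and idle: "\<forall>k<length x. k \<notin> R \<and> k \<noteq> p \<longrightarrow> y ! k = x ! k"
    unfolding conf_step_lbl_def by metis
  define K where "K i = {k. k < length x \<and> grp k = i}" for i
  define j where "j = grp p"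
  define Gen where "Gen i = (!) y ` (K i \<inter> R)" for i
  define Kill where "Kill i = (!) x ` (K i \<inter> R) - (!) x ` (K i - R - {p})" for i
  \<comment> \<open>The sender's group keeps x ! p exactly if an idle process of the group stays there.\<close>
  define U where "U = (!) x ` K j - ({x ! p} - (!) x ` (K j - R - {p}))"
  have comp: "group_states grp s x ! i = (if K i = {} then {s ! i} else (!) x ` K i)"
    "group_states grp s y ! i = (if K i = {} then {s ! i} else (!) y ` K i)" if "i < length s" for i
    using that len unfolding group_states_def K_def by auto
  have pj: "p \<in> K j" "j < length s"
    using p grp unfolding K_def j_def by auto
  have "\<forall>k\<in>K i. k \<notin> R \<longrightarrow> k \<noteq> p \<longrightarrow> y ! k = x ! k"
      "\<forall>k\<in>K i \<inter> R. (x ! k, Recv a, y ! k) \<in> delta" "p \<notin> R" for i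
    using idle recv R unfolding K_def by auto
  note image_step = image_broadcast_Gen_Kill[OF this, folded Gen_def Kill_def]
  have gen_kill: "Gen i \<subseteq> Post_recv delta a (group_states grp s x ! i) \<and>
      Kill i \<subseteq> Enabled_recv delta a (group_states grp s x ! i) \<and>
      (i \<noteq> j \<longrightarrow> group_states grp s y ! i = (group_states grp s x ! i - Kill i) \<union> Gen i) \<and>
      (\<forall>q\<in>Kill i. Post_recv delta a {q} \<inter> Gen i \<noteq> {})" if i: "i < length s" for i
  proof (cases "K i = {}")
    case True
    then show ?thesis
      using comp[OF i] unfolding Gen_def Kill_def by simp
  next
    case False
    moreover have "i \<noteq> j \<Longrightarrow> p \<notin> K i"
      unfolding K_def j_def by simp
    ultimately show ?thesis
      using comp[OF i] image_step(1-4)[of i] by simp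
  qed
  have vertex: "G_vertex Q (group_states grp s z)" if "set z \<subseteq> Q" for z
    using assms(3,4) that unfolding G_vertex_def group_states_def by (auto intro!: nth_mem)
  have lens: "length (group_states grp s x) = length s" "length (group_states grp s y) = length s"
    unfolding group_states_def by simp_all
  have j_comp: "group_states grp s y ! j = (U - Kill j) \<union> Gen j \<union> {y ! p}"
    using comp[OF pj(2)] image_step(5)[OF pj(1)] pj(1) unfolding U_def by auto
  have U: "U = group_states grp s x ! j \<or> U = group_states grp s x ! j - {x ! p}"
    using comp[OF pj(2)] pj(1) unfolding U_def by auto
  have sender: "x ! p \<in> group_states grp s x ! j" "y ! p \<in> group_states grp s y ! j"
    using comp[OF pj(2)] pj(1) by auto
  show ?thesis
    unfolding G_edge_def lens
    using vertex[OF Q(1)] vertex[OF Q(2)] pj(2) sender p(2) a gen_kill j_comp U by blast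
qed

lemma G_cycle_of_conf_cycle:
  assumes "length s \<le> card Q" "set s \<subseteq> Q"
    and "set c = set s" "(conf_step D Q delta)\<^sup>+\<^sup>+ c c"
  shows "(G_edge D Q delta)\<^sup>+\<^sup>+ (map (\<lambda>x. {x}) s) (map (\<lambda>x. {x}) s)"
proof -
  obtain n h where n: "0 < n" and h0: "h 0 = c" and hn: "h n = c"
    and step: "\<forall>t<n. conf_step D Q delta (h t) (h (Suc t))"
    using assms(4) unfolding tranclp_iff_chain by metis
  have len: "length (h t) = length c" if "t \<le> n" for t
    using that
  proof (induction t)
    case (Suc t)
    then show ?case
      using step conf_step_length[of D Q delta "h t" "h (Suc t)"] by simp
  qed (simp add: h0)
  define grp where "grp k = (SOME i. i < length s \<and> s ! i = c ! k)" for k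
  have grp: "grp k < length s \<and> s ! grp k = c ! k" if "k < length c" for k
  proof -
    have "c ! k \<in> set s"
      using that assms(3) nth_mem by blast
    then have "\<exists>i. i < length s \<and> s ! i = c ! k"
      by (simp add: in_set_conv_nth)
    then show ?thesis
      unfolding grp_def by (rule someI_ex)
  qed
  have "group_states grp s c = map (\<lambda>x. {x}) s"
  proof (rule nth_equalityI)
    fix i assume "i < length (group_states grp s c)"
    then show "group_states grp s c ! i = map (\<lambda>x. {x}) s ! i"
      using grp unfolding group_states_def by auto metis
  qed (simp add: group_states_def)
  moreover have "G_edge D Q delta (group_states grp s (h t)) (group_states grp s (h (Suc t)))"
    if t: "t < n" for t
  proof -
    obtain a where "conf_step_lbl D Q delta a (h t) (h (Suc t))"
      using step t unfolding conf_step_def by blast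
    moreover have "\<forall>k<length (h t). grp k < length s"
      using len grp t by simp
    ultimately show ?thesis
      using assms(1,2) by (rule G_edge_group_states)
  qed
  ultimately show ?thesis
    unfolding tranclp_iff_chain using n h0 hn
    by (intro exI[of _ n] exI[of _ "\<lambda>t. group_states grp s (h t)"]) simp
qed

theorem lemma2:
  fixes D :: "'d set" and Q I :: "'q set" and delta :: "('q \<times> 'd op \<times> 'q) set"
    and s :: "'q list"
  assumes "broadcast_network D Q I delta"
    and "length s \<le> card Q"
    and "set s \<subseteq> Q"
  shows "(G_edge D Q delta)\<^sup>+\<^sup>+ (map (\<lambda>x. {x}) s) (map (\<lambda>x. {x}) s) \<longleftrightarrow>
         (\<exists>c. set c \<subseteq> Q \<and> set c = set s \<and> (conf_step D Q delta)\<^sup>+\<^sup>+ c c)"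
  using conf_cycle_of_G_cycle G_cycle_of_conf_cycle[OF assms(2,3)] by blast

end
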